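(* In the polarized setting below, for $t\in H^0$ let $D(t):V_w\to V_w$ be multiplication by $t$, and for $0\le p\le w-1$ write $D(t)|_{H^p}=D^-_p(t)+D^0_p(t)+D^+_p(t)$ with $D^-_p(t)\in\mathrm{Hom}(H^p,H^{p-1})$, $D^0_p(t)\in\mathrm{Hom}(H^p,H^p)$, $D^+_p(t)\in\mathrm{Hom}(H^p,H^{p+1})$ (where $D^-_0(t)=0$, $D^+_{w-1}(t)=0$); set $D^{\pm}(t)=\sum_pD^{\pm}_p(t)$, $D^0(t)=\sum_pD^0_p(t)$ as endomorphisms of $V_w$. Then $D(t)=D^-(t)+D^0(t)+D^+(t)$ on $V_w$, $D^0(t)$ preserves the grading $V_w=\bigoplus_{p=0}^{w-1}H^p$ and $D^{\pm}(t)$ shift it by $\pm1$, and for all $t,t'\in H^0$: (i) $D^+(t)D^+(t')=D^+(t')D^+(t)$ and $D^-(t)D^-(t')=D^-(t')D^-(t)$; (ii) $D^0(t)D^{\pm}(t')+D^{\pm}(t)D^0(t')=D^0(t')D^{\pm}(t)+D^{\pm}(t')D^0(t)$; (iii) $D^0(t)D^0(t')-D^0(t')D^0(t)+D^+(t)D^-(t')-D^+(t')D^-(t)+D^-(t)D^+(t')-D^-(t')D^+(t)=0$. (Equivalently, writing $D,D^0,D^{\pm}:V_w\to (H^0)^*\otimes V_w$: $D\wedge D=0$, $D^{\pm}\wedge D^{\pm}=0$, $D^0\wedge D^{\pm}+D^{\pm}\wedge D^0=0$, $D^0\wedge D^0+D^+\wedge D^-+D^-\wedge D^+=0$.)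
   Context: Polarized setting. Let $X$ be a smooth complex projective variety of dimension $n\ge2$ with canonical divisor $K_X$, $\mathcal E$ a rank $n$ holomorphic vector bundle with $\mathcal O_X(L)=\det\mathcal E$ and $H^i(\mathcal O_X(-L))=0$ for $i\le n-1$. Let $e\in H^0(\mathcal E)$ be a section whose zero scheme $Z=Z_e$ is a finite set of $d$ distinct reduced points. Put $A=H^0(\mathcal O_Z)$ and $E_Z=\mathrm{Ext}^{n-1}(\mathcal I_Z(L),\mathcal O_X)$, viewed via Serre duality $E_Z\cong H^1(\mathcal I_Z(L+K_X))^*$ and dualizing the surjection $H^0(\mathcal O_Z(L+K_X))\to H^1(\mathcal I_Z(L+K_X))$ as a subspace of $H^0(\mathcal O_Z(L+K_X))^*\cong H^0(\omega_Z\otimes\mathcal O_X(-L-K_X))$, sections of an invertible sheaf on $Z$. An element $\alpha\in E_Z$ is regular if $f\mapsto f\alpha$ is an isomorphism $A\to H^0(\mathcal O_Z(L+K_X))^*$ (i.e. $\alpha$ vanishes at no point of $Z$). For regular $\alpha$ put $V_1=\{\beta/\alpha:\beta\in E_Z\}\subset A$ (it contains $1$), let $V_k$ be the span of all products of $k$ elements of $V_1$ (so $V_1\subset V_2\subset\cdots$), $V_0=0$, and let $w\ge1$ be the least integer with $V_k=V_w$ for all $k\ge w$. Let $q(f,g)=\sum_{z\in Z}f(z)g(z)$ be the trace form on $A$; $\alpha$ is polarizing if it is regular and $q|_{V_k}$ is non-degenerate for all $k\ge1$. For polarizing $\alpha$ define $H^p=V_p^{\perp}\cap V_{p+1}$ for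 $0\le p\le w-1$ and $H^w=V_w^{\perp}$, orthogonal complements taken in $A$ with respect to $q$. Then $A=\bigoplus_{p=0}^wH^p$, $H^0=V_1$ and $V_w=\bigoplus_{p=0}^{w-1}H^p$. *)

theory Defs
  imports Complex_Main
begin

text \<open>The finite reduced zero scheme Z is modelled by a finite type 'z; the algebra
A = H^0(O_Z) is the type of functions 'z => complex (pointwise operations).
Sections of the invertible sheaf on Z are identified with functions on Z
via a fixed trivialisation, so E_Z is a linear subspace of 'z => complex.\<close>

definition fadd :: "('z \<Rightarrow> complex) \<Rightarrow> ('z \<Rightarrow> complex) \<Rightarrow> ('z \<Rightarrow> complex)" where
  "fadd f g = (\<lambda>x. f x + g x)"

definition fsub :: "('z \<Rightarrow> complex) \<Rightarrow> ('z \<Rightarrow> complex) \<Rightarrow> ('z \<Rightarrow> complex)" where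
  "fsub f g = (\<lambda>x. f x - g x)"

definition fmul :: "('z \<Rightarrow> complex) \<Rightarrow> ('z \<Rightarrow> complex) \<Rightarrow> ('z \<Rightarrow> complex)" where
  "fmul f g = (\<lambda>x. f x * g x)"

definition is_subspace :: "('z \<Rightarrow> complex) set \<Rightarrow> bool" where
  "is_subspace S \<longleftrightarrow> (\<lambda>x. 0) \<in> S \<and> (\<forall>f\<in>S. \<forall>g\<in>S. fadd f g \<in> S)
      \<and> (\<forall>c. \<forall>f\<in>S. (\<lambda>x. c * f x) \<in> S)"

definition lin_span :: "('z \<Rightarrow> complex) set \<Rightarrow> ('z \<Rightarrow> complex) set" where
  "lin_span S = {f. \<exists>T c. finite T \<and> T \<subseteq> S \<and> f = (\<lambda>x. \<Sum>g\<in>T. c g * g x)}"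

definition Vpow :: "('z \<Rightarrow> complex) set \<Rightarrow> nat \<Rightarrow> ('z \<Rightarrow> complex) set" where
  "Vpow V1 k = (if k = 0 then {\<lambda>x. 0}
     else lin_span {(\<lambda>x. \<Prod>i<k. fs i x) | fs. \<forall>i<k. fs i \<in> V1})"

definition stab_index :: "('z \<Rightarrow> complex) set \<Rightarrow> nat" where
  "stab_index V1 = (LEAST w. 1 \<le> w \<and> (\<forall>k\<ge>w. Vpow V1 k = Vpow V1 w))"

definition trace_form :: "('z::finite \<Rightarrow> complex) \<Rightarrow> ('z \<Rightarrow> complex) \<Rightarrow> complex" where
  "trace_form f g = (\<Sum>z\<in>UNIV. f z * g z)"

definition q_orth :: "('z::finite \<Rightarrow> complex) set \<Rightarrow> ('z \<Rightarrow> complex) set" where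
  "q_orth S = {f. \<forall>g\<in>S. trace_form f g = 0}"

definition nondeg_on :: "('z::finite \<Rightarrow> complex) set \<Rightarrow> bool" where
  "nondeg_on S \<longleftrightarrow> (\<forall>f\<in>S. (\<forall>g\<in>S. trace_form f g = 0) \<longrightarrow> f = (\<lambda>x. 0))"

definition regular :: "('z \<Rightarrow> complex) \<Rightarrow> bool" where
  "regular \<alpha> \<longleftrightarrow> (\<forall>z. \<alpha> z \<noteq> 0)"

definition V1_of :: "('z \<Rightarrow> complex) set \<Rightarrow> ('z \<Rightarrow> complex) \<Rightarrow> ('z \<Rightarrow> complex) set" where
  "V1_of E \<alpha> = {(\<lambda>z. \<beta> z / \<alpha> z) | \<beta>. \<beta> \<in> E}"

definition polarizing :: "('z::finite \<Rightarrow> complex) set \<Rightarrow> ('z \<Rightarrow> complex) \<Rightarrow> bool" where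
  "polarizing E \<alpha> \<longleftrightarrow> \<alpha> \<in> E \<and> regular \<alpha> \<and> (\<forall>k\<ge>1. nondeg_on (Vpow (V1_of E \<alpha>) k))"

definition wE :: "('z \<Rightarrow> complex) set \<Rightarrow> ('z \<Rightarrow> complex) \<Rightarrow> nat" where
  "wE E \<alpha> = stab_index (V1_of E \<alpha>)"

definition VE :: "('z \<Rightarrow> complex) set \<Rightarrow> ('z \<Rightarrow> complex) \<Rightarrow> nat \<Rightarrow> ('z \<Rightarrow> complex) set" where
  "VE E \<alpha> k = Vpow (V1_of E \<alpha>) k"

definition Hsp :: "('z::finite \<Rightarrow> complex) set \<Rightarrow> ('z \<Rightarrow> complex) \<Rightarrow> nat \<Rightarrow> ('z \<Rightarrow> complex) set" where
  "Hsp E \<alpha> p = (if p < wE E \<alpha> then q_orth (VE E \<alpha> p) \<inter> VE E \<alpha> (Suc p)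
                 else if p = wE E \<alpha> then q_orth (VE E \<alpha> (wE E \<alpha>)) else {\<lambda>x. 0})"

definition hcomp :: "('z::finite \<Rightarrow> complex) set \<Rightarrow> ('z \<Rightarrow> complex) \<Rightarrow> nat \<Rightarrow> ('z \<Rightarrow> complex) \<Rightarrow> ('z \<Rightarrow> complex)" where
  "hcomp E \<alpha> j f = (THE g. \<exists>gs. (\<forall>i. gs i \<in> Hsp E \<alpha> i)
       \<and> f = (\<lambda>x. \<Sum>i\<le>wE E \<alpha>. gs i x) \<and> g = gs j)"

definition Dzero :: "('z::finite \<Rightarrow> complex) set \<Rightarrow> ('z \<Rightarrow> complex) \<Rightarrow> ('z \<Rightarrow> complex) \<Rightarrow> ('z \<Rightarrow> complex) \<Rightarrow> ('z \<Rightarrow> complex)" where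
  "Dzero E \<alpha> t f = (\<lambda>x. \<Sum>p<wE E \<alpha>. hcomp E \<alpha> p (fmul t (hcomp E \<alpha> p f)) x)"

definition Dplus :: "('z::finite \<Rightarrow> complex) set \<Rightarrow> ('z \<Rightarrow> complex) \<Rightarrow> ('z \<Rightarrow> complex) \<Rightarrow> ('z \<Rightarrow> complex) \<Rightarrow> ('z \<Rightarrow> complex)" where
  "Dplus E \<alpha> t f = (\<lambda>x. \<Sum>p<wE E \<alpha> - 1. hcomp E \<alpha> (Suc p) (fmul t (hcomp E \<alpha> p f)) x)"

definition Dminus :: "('z::finite \<Rightarrow> complex) set \<Rightarrow> ('z \<Rightarrow> complex) \<Rightarrow> ('z \<Rightarrow> complex) \<Rightarrow> ('z \<Rightarrow> complex) \<Rightarrow> ('z \<Rightarrow> complex)" where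
  "Dminus E \<alpha> t f = (\<lambda>x. \<Sum>p\<in>{1..<wE E \<alpha>}. hcomp E \<alpha> (p - 1) (fmul t (hcomp E \<alpha> p f)) x)"

end

theory Submission
  imports Defs "HOL-Library.Function_Algebras"
begin

text \<open>
  The trace form \<open>q\<close> is non-degenerate on \<open>A\<close> and multiplication by any \<open>t \<in> A\<close> is
  \<open>q\<close>-self-adjoint. Non-degeneracy on every \<open>V\<^sub>k\<close> splits \<open>A\<close> orthogonally as
  \<open>H\<^sup>0 \<oplus> \<dots> \<oplus> H\<^sup>w\<close> with \<open>V\<^sub>k = H\<^sup>0 \<oplus> \<dots> \<oplus> H\<^sup>k\<^sup>-\<^sup>1\<close>. For \<open>t \<in> H\<^sup>0 = V\<^sub>1\<close> we have
  \<open>t V\<^sub>k \<subseteq> V\<^sub>k\<^sub>+\<^sub>1\<close>, so \<open>t H\<^sup>p\<close> has no components above degree \<open>p + 1\<close>, and by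
  self-adjointness none below \<open>p - 1\<close>: multiplication by \<open>t\<close> is tridiagonal, which is
  \<open>D = D\<^sup>- + D\<^sup>0 + D\<^sup>+\<close>. The relations come from \<open>t (t' f) = t' (t f)\<close>: for \<open>f \<in> H\<^sup>p\<close> both
  sides expand into nine terms \<open>D\<^sup>a(t) D\<^sup>b(t') f\<close> of degree \<open>p + a + b\<close>, and comparing the
  components of degrees \<open>p - 2, \<dots>, p + 2\<close> gives the five identities, which extend to
  \<open>V\<^sub>w\<close> by linearity.
\<close>

section \<open>Functions on a finite set\<close>

lemma sum_apply: "(\<Sum>i\<in>S. F i) x = (\<Sum>i\<in>S. F i x)"
  by (induction S rule: infinite_finite_induct) auto

lemma lambda_sum: "(\<lambda>x. \<Sum>i\<in>S. F i x) = (\<Sum>i\<in>S. F i)"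
  by (simp add: fun_eq_iff sum_apply)

lemma fadd_eq_plus: "fadd f g = f + g"
  by (simp add: fadd_def fun_eq_iff)

lemma fsub_eq_minus: "fsub f g = f - g"
  by (simp add: fsub_def fun_eq_iff)

lemma fmul_eq_times: "fmul f g = f * g"
  by (simp add: fmul_def fun_eq_iff)

interpretation vs: vector_space "\<lambda>(c::complex) (f::'z \<Rightarrow> complex) x. c * f x"
  by unfold_locales (auto simp: fun_eq_iff algebra_simps)

definition delta :: "'z \<Rightarrow> 'z \<Rightarrow> complex" where
  "delta z = (\<lambda>x. if x = z then 1 else 0)"

lemma sum_delta_expansion: "(\<Sum>z\<in>UNIV. (\<lambda>x. f z * delta z x)) = (f :: 'z::finite \<Rightarrow> complex)"
  by (simp add: fun_eq_iff sum_apply delta_def if_distrib[of "(*) _"] sum.If_cases)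

lemma span_range_delta: "vs.span (range delta) = (UNIV :: ('z::finite \<Rightarrow> complex) set)"
proof -
  have "(\<Sum>z\<in>UNIV. (\<lambda>x. f z * delta z x)) \<in> vs.span (range delta)" for f :: "'z \<Rightarrow> complex"
    by (intro vs.span_sum vs.span_scale vs.span_base) auto
  then show ?thesis
    by (auto simp: sum_delta_expansion)
qed

lemma independent_range_delta: "vs.independent (range (delta :: 'z::finite \<Rightarrow> _))"
proof
  assume "vs.dependent (range (delta :: 'z \<Rightarrow> _))"
  then obtain u where "\<exists>v\<in>range delta. u v \<noteq> 0"
    and sum: "(\<Sum>v\<in>range (delta :: 'z \<Rightarrow> _). (\<lambda>x. u v * v x)) = 0"
    by (subst (asm) vs.dependent_finite) auto
  then obtain z where z: "u (delta z) \<noteq> 0"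
    by auto
  have inj: "inj delta"
    by (auto simp: inj_def delta_def fun_eq_iff split: if_splits)
  have "(\<Sum>v\<in>range (delta :: 'z \<Rightarrow> _). (\<lambda>x. u v * v x)) z = (\<Sum>y\<in>UNIV. u (delta y) * delta y z)"
    by (simp add: sum_apply sum.reindex[OF inj])
  also have "\<dots> = u (delta z)"
    by (simp add: delta_def if_distrib[of "(*) _"] sum.If_cases)
  finally show False
    using sum z by simp
qed

interpretation fd: finite_dimensional_vector_space
  "\<lambda>(c::complex) (f::'z::finite \<Rightarrow> complex) x. c * f x" "range delta"
  by unfold_locales (auto simp: span_range_delta independent_range_delta)

interpretation fp: finite_dimensional_vector_space_pair_1
  "\<lambda>(c::complex) (f::'z::finite \<Rightarrow> complex) x. c * f x" "range delta"
  "\<lambda>(c::complex) (f::'z::finite \<Rightarrow> complex) x. c * f x"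
  by unfold_locales

abbreviation fun_linear :: "(('z \<Rightarrow> complex) \<Rightarrow> ('z \<Rightarrow> complex)) \<Rightarrow> bool" where
  "fun_linear \<equiv> Vector_Spaces.linear (\<lambda>c f x. c * f x) (\<lambda>c f x. c * f x)"

lemma fun_linear_compose: "fun_linear L \<Longrightarrow> fun_linear M \<Longrightarrow> fun_linear (\<lambda>f. L (M f))"
  using Vector_Spaces.linear_compose[of _ _ M _ L] by (simp add: comp_def)

lemma fun_linear_times: "fun_linear (\<lambda>f. t * f)"
  by (auto simp: Vector_Spaces.linear_iff vs.vector_space_axioms algebra_simps fun_eq_iff)

section \<open>The trace form\<close>

lemma trace_form_add_left: "trace_form (f + g) h = trace_form f h + trace_form g h"
  by (simp add: trace_form_def algebra_simps sum.distrib)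

lemma trace_form_diff_right: "trace_form h (f - g) = trace_form h f - trace_form h g"
  by (simp add: trace_form_def algebra_simps sum_subtractf)

lemma trace_form_scale_left: "trace_form (\<lambda>x. c * f x) g = c * trace_form f g"
  by (simp add: trace_form_def sum_distrib_left algebra_simps)

lemma trace_form_commute: "trace_form f g = trace_form g f"
  by (simp add: trace_form_def mult.commute)

lemma trace_form_zero_left [simp]: "trace_form 0 g = 0"
  by (simp add: trace_form_def)

lemma trace_form_zero_right [simp]: "trace_form f 0 = 0"
  by (simp add: trace_form_def)

lemma trace_form_sum_left: "trace_form (\<Sum>i\<in>S. F i) g = (\<Sum>i\<in>S. trace_form (F i) g)"
  by (simp add: trace_form_def sum_apply sum_distrib_right sum.swap[of _ UNIV])

lemma trace_form_times_left: "trace_form (t * f) g = trace_form f (t * g)"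
  by (simp add: trace_form_def mult_ac)

lemma trace_form_delta_right: "trace_form f (delta z) = f z"
  by (simp add: trace_form_def delta_def if_distrib[of "(*) _"] sum.If_cases)

lemma q_orth_subspace: "vs.subspace (q_orth S)"
  by (auto simp: vs.subspace_def q_orth_def trace_form_add_left trace_form_scale_left)

lemma q_orth_span: "q_orth (vs.span B) = q_orth B"
proof
  show "q_orth (vs.span B) \<subseteq> q_orth B"
    using vs.span_superset by (auto simp: q_orth_def)
  show "q_orth B \<subseteq> q_orth (vs.span B)"
  proof
    fix f assume "f \<in> q_orth B"
    then have "B \<subseteq> q_orth {f}"
      by (auto simp: q_orth_def trace_form_commute)
    then have "vs.span B \<subseteq> q_orth {f}"
      by (rule vs.span_minimal[OF _ q_orth_subspace])
    then show "f \<in> q_orth (vs.span B)"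
      by (auto simp: q_orth_def trace_form_commute)
  qed
qed

lemma q_orth_UNIV: "q_orth (UNIV :: ('z::finite \<Rightarrow> complex) set) = {0}"
  by (auto simp: q_orth_def fun_eq_iff trace_form_delta_right[symmetric])

lemma nondeg_onD: "nondeg_on S \<Longrightarrow> f \<in> S \<Longrightarrow> f \<in> q_orth S \<Longrightarrow> f = 0"
  by (simp add: nondeg_on_def q_orth_def zero_fun_def)

text \<open>The map \<open>f \<mapsto> \<Sum>b\<in>B. q(f,b) b\<close>, for a basis \<open>B\<close> of \<open>S\<close>, is injective on \<open>S\<close> by
  non-degeneracy, hence onto \<open>S\<close>; a preimage \<open>s \<in> S\<close> of the image of \<open>f\<close> is its projection.\<close>
lemma orthogonal_decomposition:
  fixes S :: "('z::finite \<Rightarrow> complex) set"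
  assumes S: "vs.subspace S" and nondeg: "nondeg_on S"
  obtains s where "s \<in> S" "f - s \<in> q_orth S"
proof -
  obtain B where B: "B \<subseteq> S" "vs.independent B" "S \<subseteq> vs.span B"
    by (rule vs.maximal_independent_subset)
  have "finite B"
    using B(2) by (rule fd.finiteI_independent)
  have span_B: "vs.span B = S"
    using vs.span_minimal[OF B(1) S] B(3) by (rule antisym)
  define T where "T f = (\<Sum>b\<in>B. (\<lambda>x. trace_form f b * b x))" for f
  have "fun_linear T"
  proof (unfold Vector_Spaces.linear_iff, intro conjI allI vs.vector_space_axioms)
    fix f g :: "'z \<Rightarrow> complex" and c :: complex
    show "T (f + g) = T f + T g"
      by (simp add: T_def trace_form_add_left fun_eq_iff sum_apply sum.distrib algebra_simps)
    show "T (\<lambda>x. c * f x) = (\<lambda>x. c * T f x)"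
      by (simp add: T_def trace_form_scale_left fun_eq_iff sum_apply sum_distrib_left algebra_simps)
  qed
  then interpret T: Vector_Spaces.linear "\<lambda>c f x. c * f x" "\<lambda>c f x. c * f x" T .
  have T_S: "T f \<in> S" for f
    unfolding T_def span_B[symmetric] by (intro vs.span_sum vs.span_scale vs.span_base) auto
  have kernel: "y \<in> q_orth S" if "T y = 0" for y
  proof -
    have "\<forall>b\<in>B. trace_form y b = 0"
    proof (rule ccontr)
      assume "\<not> (\<forall>b\<in>B. trace_form y b = 0)"
      then have "vs.dependent B"
        using \<open>finite B\<close> that unfolding T_def
        by (subst vs.dependent_finite) (auto intro!: exI[of _ "\<lambda>b. trace_form y b"])
      then show False
        using B(2) by simp
    qed
    then show ?thesis
      using q_orth_span[of B] span_B by (auto simp: q_orth_def)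
  qed
  have "inj_on T S"
    using kernel nondeg_onD[OF nondeg] by (simp add: T.inj_on_iff_eq_0[OF S])
  then have "vs.dim (T ` S) = vs.dim S"
    using fp.dim_image_eq[OF T.linear_axioms, of S] vs.span_eq_iff[THEN iffD2, OF S] by simp
  then have "T ` S = S"
    using fd.subspace_dim_equal[OF T.subspace_image[OF S] S] T_S by auto
  then obtain s where "s \<in> S" "T f = T s"
    using T_S[of f] by (metis imageE)
  then show ?thesis
    using that kernel[of "f - s"] by (simp add: T.diff)
qed

lemma nondeg_on_UNIV: "nondeg_on (UNIV :: ('z::finite \<Rightarrow> complex) set)"
  using q_orth_UNIV by (auto simp: nondeg_on_def q_orth_def zero_fun_def)

text \<open>Splitting \<open>v \<in> U\<close> along \<open>S\<close> shows that a vector of \<open>q_orth S \<inter> U\<close> orthogonal to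
  that space is orthogonal to all of \<open>U\<close>.\<close>
lemma nondeg_on_q_orth_Int:
  fixes S U :: "('z::finite \<Rightarrow> complex) set"
  assumes "vs.subspace S" "nondeg_on S" "vs.subspace U" "nondeg_on U" "S \<subseteq> U"
  shows "nondeg_on (q_orth S \<inter> U)"
  unfolding nondeg_on_def
proof (intro ballI impI)
  fix d assume d: "d \<in> q_orth S \<inter> U" and orth: "\<forall>g\<in>q_orth S \<inter> U. trace_form d g = 0"
  have "trace_form d v = 0" if "v \<in> U" for v
  proof -
    obtain s where s: "s \<in> S" "v - s \<in> q_orth S"
      using orthogonal_decomposition[OF assms(1,2)] .
    then have "v - s \<in> U"
      using \<open>v \<in> U\<close> assms(3,5) vs.subspace_diff by blast
    then have "trace_form d (v - s) = 0"
      using orth s(2) by blast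
    moreover have "trace_form d s = 0"
      using d s(1) by (auto simp: q_orth_def)
    ultimately show ?thesis
      by (simp add: trace_form_diff_right)
  qed
  then show "d = (\<lambda>x. 0)"
    using d assms(4) by (auto simp: nondeg_on_def)
qed

section \<open>The filtration \<open>V\<^sub>k\<close>\<close>

definition products :: "('z \<Rightarrow> complex) set \<Rightarrow> nat \<Rightarrow> ('z \<Rightarrow> complex) set" where
  "products V1 k = {(\<lambda>x. \<Prod>i<k. fs i x) | fs. \<forall>i<k. fs i \<in> V1}"

lemma lin_span_eq_span: "lin_span S = vs.span S"
  by (auto simp: lin_span_def vs.span_explicit lambda_sum)

lemma Vpow_eq_span: "Vpow V1 k = (if k = 0 then {0} else vs.span (products V1 k))"
  by (simp add: Vpow_def products_def lin_span_eq_span zero_fun_def)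

lemma Vpow_0 [simp]: "Vpow V1 0 = {0}"
  by (simp add: Vpow_eq_span)

lemma Vpow_subspace: "vs.subspace (Vpow V1 k)"
  by (simp add: Vpow_eq_span)

lemma products_1: "products V1 1 = V1"
  by (auto simp: products_def)

lemma products_Suc: "products V1 (Suc k) = {t * g | t g. t \<in> V1 \<and> g \<in> products V1 k}"
proof safe
  fix f assume "f \<in> products V1 (Suc k)"
  then obtain fs where "\<forall>i<Suc k. fs i \<in> V1" "f = (\<lambda>x. \<Prod>i<Suc k. fs i x)"
    by (auto simp: products_def)
  then show "\<exists>t g. f = t * g \<and> t \<in> V1 \<and> g \<in> products V1 k"
    by (intro exI[of _ "fs k"] exI[of _ "\<lambda>x. \<Prod>i<k. fs i x"]) (auto simp: products_def fun_eq_iff)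
next
  fix t g assume "t \<in> V1" "g \<in> products V1 k"
  then obtain fs where fs: "\<forall>i<k. fs i \<in> V1" "g = (\<lambda>x. \<Prod>i<k. fs i x)"
    by (auto simp: products_def)
  have "t * g = (\<lambda>x. \<Prod>i<Suc k. (fs(k := t)) i x)"
    using fs(2) by (simp add: fun_eq_iff mult.commute)
  moreover have "\<forall>i<Suc k. (fs(k := t)) i \<in> V1"
    using fs(1) \<open>t \<in> V1\<close> by (simp add: less_Suc_eq)
  ultimately show "t * g \<in> products V1 (Suc k)"
    unfolding products_def by blast
qed

lemma Vpow_1: "vs.subspace V1 \<Longrightarrow> Vpow V1 1 = V1"
  unfolding Vpow_eq_span products_1 by (simp add: vs.span_eq_iff)

lemma times_Vpow:
  assumes "t \<in> V1" "g \<in> Vpow V1 k"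
  shows "t * g \<in> Vpow V1 (Suc k)"
proof (cases "k = 0")
  case True
  then show ?thesis
    using assms(2) vs.subspace_0[OF Vpow_subspace] by simp
next
  case False
  have "products V1 k \<subseteq> (\<lambda>g. t * g) -` Vpow V1 (Suc k)"
    using assms(1) by (auto simp: Vpow_eq_span products_Suc intro: vs.span_base)
  then have "vs.span (products V1 k) \<subseteq> (\<lambda>g. t * g) -` Vpow V1 (Suc k)"
    by (rule vs.span_minimal[OF _ module_hom.subspace_vimage[OF
          fun_linear_times[unfolded linear_iff_module_hom] Vpow_subspace]])
  then show ?thesis
    using assms(2) False by (auto simp: Vpow_eq_span)
qed

lemma Vpow_subset_Suc: "1 \<in> V1 \<Longrightarrow> Vpow V1 k \<subseteq> Vpow V1 (Suc k)"
  using times_Vpow[of 1 V1] by fastforce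

lemma Vpow_mono: "1 \<in> V1 \<Longrightarrow> k \<le> m \<Longrightarrow> Vpow V1 k \<subseteq> Vpow V1 m"
  using lift_Suc_mono_le[of "Vpow V1"] Vpow_subset_Suc by blast

lemma Vpow_Suc_Suc_eq:
  assumes "1 \<in> V1" "Vpow V1 (Suc k) = Vpow V1 k"
  shows "Vpow V1 (Suc (Suc k)) = Vpow V1 (Suc k)"
proof
  have "products V1 (Suc (Suc k)) \<subseteq> Vpow V1 (Suc k)"
  proof
    fix f assume "f \<in> products V1 (Suc (Suc k))"
    then obtain t g where "f = t * g" "t \<in> V1" "g \<in> products V1 (Suc k)"
      by (auto simp: products_Suc[of V1 "Suc k"])
    moreover have "g \<in> Vpow V1 (Suc k)"
      using \<open>g \<in> products V1 (Suc k)\<close> by (simp add: Vpow_eq_span vs.span_base)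
    ultimately show "f \<in> Vpow V1 (Suc k)"
      using times_Vpow[of t V1 g k] assms(2) by simp
  qed
  then show "Vpow V1 (Suc (Suc k)) \<subseteq> Vpow V1 (Suc k)"
    using vs.span_minimal[OF _ Vpow_subspace] by (simp add: Vpow_eq_span[of _ "Suc (Suc k)"])
  show "Vpow V1 (Suc k) \<subseteq> Vpow V1 (Suc (Suc k))"
    using assms(1) by (rule Vpow_subset_Suc)
qed

lemma Vpow_Suc_eq_from:
  assumes "1 \<in> V1" "Vpow V1 (Suc k) = Vpow V1 k" "k \<le> m"
  shows "Vpow V1 (Suc m) = Vpow V1 m"
  using assms(3)
  by (induction m rule: dec_induct) (simp_all add: assms(2) Vpow_Suc_Suc_eq[OF assms(1)])

lemma Vpow_eq_from:
  assumes "1 \<in> V1" "Vpow V1 (Suc k) = Vpow V1 k" "k \<le> m"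
  shows "Vpow V1 m = Vpow V1 k"
  using assms(3) by (induction m rule: dec_induct) (simp_all add: Vpow_Suc_eq_from[OF assms(1,2)])

lemma Vpow_stabilizes:
  fixes V1 :: "('z::finite \<Rightarrow> complex) set"
  assumes "1 \<in> V1"
  obtains k where "Vpow V1 (Suc k) = Vpow V1 k"
proof (cases "\<exists>k. Vpow V1 (Suc k) = Vpow V1 k")
  case False
  have "k \<le> vs.dim (Vpow V1 k)" for k
  proof (induction k)
    case (Suc k)
    have "Vpow V1 k \<subset> Vpow V1 (Suc k)"
      using Vpow_subset_Suc[OF assms, of k] False by auto
    then have "vs.dim (Vpow V1 k) < vs.dim (Vpow V1 (Suc k))"
      using fd.dim_psubset[of "Vpow V1 k" "Vpow V1 (Suc k)"]
      by (simp only: vs.span_eq_iff[THEN iffD2, OF Vpow_subspace])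
    with Suc show ?case
      by simp
  qed simp
  moreover have "vs.dim (Vpow V1 k) \<le> vs.dim (UNIV :: ('z \<Rightarrow> complex) set)" for k
    by (rule fd.dim_subset) simp
  ultimately show ?thesis
    using not_less_eq_eq order_trans by blast
qed blast

lemma
  fixes V1 :: "('z::finite \<Rightarrow> complex) set"
  assumes "1 \<in> V1"
  shows stab_index_ge_1: "1 \<le> stab_index V1"
    and Vpow_stab_index: "stab_index V1 \<le> k \<Longrightarrow> Vpow V1 k = Vpow V1 (stab_index V1)"
proof -
  obtain k0 where k0: "Vpow V1 (Suc k0) = Vpow V1 k0"
    using Vpow_stabilizes[OF assms] .
  have "1 \<le> Suc k0 \<and> (\<forall>m\<ge>Suc k0. Vpow V1 m = Vpow V1 (Suc k0))"
  proof (intro conjI allI impI)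
    fix m assume "Suc k0 \<le> m"
    then show "Vpow V1 m = Vpow V1 (Suc k0)"
      using Vpow_eq_from[OF assms k0, of m] k0 by simp
  qed simp
  then have "1 \<le> stab_index V1 \<and> (\<forall>m\<ge>stab_index V1. Vpow V1 m = Vpow V1 (stab_index V1))"
    unfolding stab_index_def by (rule LeastI)
  then show "1 \<le> stab_index V1" "stab_index V1 \<le> k \<Longrightarrow> Vpow V1 k = Vpow V1 (stab_index V1)"
    by blast+
qed

lemma sum_if_Suc_eq:
  "(\<Sum>j<n. if Suc j = p then x j else 0)
    = (if 0 < p \<and> p \<le> n then x (p - 1) else (0::'a::comm_monoid_add))"
  by (cases p) auto

section \<open>The decomposition \<open>A = H\<^sup>0 \<oplus> \<dots> \<oplus> H\<^sup>w\<close>\<close>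

locale polarized =
  fixes E :: "('z::finite \<Rightarrow> complex) set" and \<alpha> :: "'z \<Rightarrow> complex"
  assumes E_subspace: "is_subspace E" and polarizing: "polarizing E \<alpha>"
begin

abbreviation "V1 \<equiv> V1_of E \<alpha>"
abbreviation "V \<equiv> Vpow V1"
abbreviation "w \<equiv> stab_index V1"
abbreviation "H \<equiv> Hsp E \<alpha>"
abbreviation "proj \<equiv> hcomp E \<alpha>"

lemma V1_subspace: "vs.subspace V1"
proof -
  have "V1 = (\<lambda>\<beta>. (\<lambda>z. inverse (\<alpha> z)) * \<beta>) ` E"
    by (auto simp: V1_of_def image_def times_fun_def divide_inverse mult.commute)
  moreover have "vs.subspace E"
    using E_subspace by (simp add: is_subspace_def vs.subspace_def fadd_eq_plus zero_fun_def)
  ultimately show ?thesis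
    using module_hom.subspace_image[OF fun_linear_times[unfolded linear_iff_module_hom]] by simp
qed

lemma one_in_V1: "1 \<in> V1"
  using polarizing unfolding polarizing_def regular_def V1_of_def
  by (auto intro!: exI[of _ \<alpha>] simp: fun_eq_iff)

lemma w_ge_1: "1 \<le> w"
  using stab_index_ge_1[OF one_in_V1] .

lemma V_stable: "w \<le> k \<Longrightarrow> V k = V w"
  using Vpow_stab_index[OF one_in_V1] .

lemma V_subset_Vw: "V k \<subseteq> V w"
  using Vpow_mono[OF one_in_V1, of k w] V_stable[of k] by (cases "k \<le> w") auto

lemma nondeg_V: "nondeg_on (V k)"
  using polarizing by (cases k) (auto simp: polarizing_def nondeg_on_def zero_fun_def)

lemma H_eq:
  "H p = (if p < w then q_orth (V p) \<inter> V (Suc p) else if p = w then q_orth (V w) else {0})"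
  by (simp add: Hsp_def VE_def wE_def zero_fun_def)

lemma H_0: "H 0 = V1"
  using w_ge_1 Vpow_1[OF V1_subspace] by (simp add: H_eq q_orth_def)

lemma H_subspace: "vs.subspace (H p)"
  by (simp add: H_eq vs.subspace_inter q_orth_subspace Vpow_subspace)

lemma H_subset_V: "p < w \<Longrightarrow> H p \<subseteq> V (Suc p)"
  by (simp add: H_eq)

lemma H_subset_Vw: "p < w \<Longrightarrow> H p \<subseteq> V w"
  using H_subset_V V_subset_Vw by blast

lemma H_subset_q_orth: "p \<le> w \<Longrightarrow> H p \<subseteq> q_orth (V p)"
  by (auto simp: H_eq)

lemma H_above_w: "w < p \<Longrightarrow> H p = {0}"
  by (simp add: H_eq)

lemma H_orthogonal:
  assumes "i \<noteq> j" "a \<in> H i" "b \<in> H j"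
  shows "trace_form a b = 0"
proof -
  have "trace_form a b = 0" if "i < j" "a \<in> H i" "b \<in> H j" for i j a b
  proof (cases "j \<le> w")
    case True
    have "i < w"
      using that(1) True by simp
    then have "a \<in> V j"
      using that H_subset_V[of i] Vpow_mono[OF one_in_V1, of "Suc i" j] by auto
    then show ?thesis
      using H_subset_q_orth[OF True] that(3) by (auto simp: q_orth_def trace_form_commute)
  next
    case False
    then show ?thesis
      using H_above_w that(3) by simp
  qed
  then show ?thesis
    using assms by (metis linorder_neq_iff trace_form_commute)
qed

lemma nondeg_H: "nondeg_on (H p)"
proof -
  consider "p < w" | "p = w" | "w < p"
    by linarith
  then show ?thesis
  proof cases
    case 1
    then show ?thesis
      using nondeg_on_q_orth_Int[OF Vpow_subspace nondeg_V Vpow_subspace nondeg_V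
          Vpow_subset_Suc[OF one_in_V1]] by (simp add: H_eq)
  next
    case 2
    then show ?thesis
      using nondeg_on_q_orth_Int[OF Vpow_subspace nondeg_V _ nondeg_on_UNIV, of w]
      by (simp add: H_eq)
  next
    case 3
    then show ?thesis
      by (simp add: H_above_w nondeg_on_def zero_fun_def)
  qed
qed

lemma decomposition_V:
  assumes "k \<le> w" "f \<in> V k"
  shows "\<exists>gs. (\<forall>i. gs i \<in> H i) \<and> (\<forall>i\<ge>k. gs i = 0) \<and> f = (\<Sum>i\<le>w. gs i)"
  using assms
proof (induction k arbitrary: f)
  case 0
  then show ?case
    using vs.subspace_0[OF H_subspace] by (intro exI[of _ "\<lambda>_. 0"]) (simp add: zero_fun_def)
next
  case (Suc k)
  obtain s where s: "s \<in> V k" "f - s \<in> q_orth (V k)"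
    using orthogonal_decomposition[OF Vpow_subspace nondeg_V] .
  have "f - s \<in> V (Suc k)"
    using s(1) Suc.prems(2) Vpow_subset_Suc[OF one_in_V1, of k] vs.subspace_diff[OF Vpow_subspace]
    by blast
  then have fs: "f - s \<in> H k"
    using s(2) Suc.prems(1) by (simp add: H_eq)
  obtain gs where gs: "\<forall>i. gs i \<in> H i" "\<forall>i\<ge>k. gs i = 0" "s = (\<Sum>i\<le>w. gs i)"
    using Suc.IH[OF _ s(1)] Suc.prems(1) Suc_leD by blast
  define gs' where "gs' i = gs i + (if i = k then f - s else 0)" for i
  have "gs' i \<in> H i" for i
    using gs(1,2) fs by (cases "i = k") (simp_all add: gs'_def)
  moreover have "\<forall>i\<ge>Suc k. gs' i = 0"
    using gs(2) by (simp add: gs'_def)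
  moreover have "f = (\<Sum>i\<le>w. gs' i)"
    using gs(3) Suc.prems(1) by (simp add: gs'_def sum.distrib)
  ultimately show ?case
    by blast
qed

lemma decomposition: "\<exists>gs. (\<forall>i. gs i \<in> H i) \<and> f = (\<Sum>i\<le>w. gs i)"
proof -
  obtain s where s: "s \<in> V w" "f - s \<in> q_orth (V w)"
    using orthogonal_decomposition[OF Vpow_subspace nondeg_V] .
  then have "f - s \<in> H w"
    by (simp add: H_eq)
  moreover obtain gs where "\<forall>i. gs i \<in> H i" "\<forall>i\<ge>w. gs i = 0" "s = (\<Sum>i\<le>w. gs i)"
    using decomposition_V[OF order_refl s(1)] by auto
  ultimately show ?thesis
    by (intro exI[of _ "\<lambda>i. gs i + (if i = w then f - s else 0)"])
      (auto simp: sum.distrib vs.subspace_0[OF H_subspace])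
qed

lemma decomposition_unique:
  assumes gs: "\<forall>i. gs i \<in> H i" and hs: "\<forall>i. hs i \<in> H i"
    and sum_eq: "(\<Sum>i\<le>w. gs i) = (\<Sum>i\<le>w. hs i)"
  shows "gs j = hs j"
proof (cases "j \<le> w")
  case True
  have d: "gs i - hs i \<in> H i" for i
    using gs hs vs.subspace_diff[OF H_subspace] by blast
  have "trace_form (gs j - hs j) h = 0" if "h \<in> H j" for h
  proof -
    have "0 = trace_form (\<Sum>i\<le>w. gs i - hs i) h"
      using sum_eq by (simp add: sum_subtractf)
    also have "\<dots> = (\<Sum>i\<le>w. if i = j then trace_form (gs j - hs j) h else 0)"
      unfolding trace_form_sum_left using H_orthogonal d that by (intro sum.cong) auto
    finally show ?thesis
      using True by simp
  qed
  then have "gs j - hs j = 0"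
    using nondeg_onD[OF nondeg_H d] by (simp add: q_orth_def)
  then show ?thesis
    by simp
next
  case False
  then show ?thesis
    using gs[rule_format, of j] hs[rule_format, of j] H_above_w[of j] by simp
qed

lemma proj_eqI:
  assumes "\<forall>i. gs i \<in> H i" "f = (\<Sum>i\<le>w. gs i)"
  shows "proj j f = gs j"
  unfolding hcomp_def wE_def lambda_sum
proof (rule the_equality)
  show "\<exists>hs. (\<forall>i. hs i \<in> H i) \<and> f = (\<Sum>i\<le>w. hs i) \<and> gs j = hs j"
    using assms by blast
  fix g assume "\<exists>hs. (\<forall>i. hs i \<in> H i) \<and> f = (\<Sum>i\<le>w. hs i) \<and> g = hs j"
  then obtain hs where "\<forall>i. hs i \<in> H i" "f = (\<Sum>i\<le>w. hs i)" "g = hs j"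
    by blast
  then show "g = gs j"
    using assms decomposition_unique[of hs gs j] by simp
qed

lemma proj_in_H: "proj j f \<in> H j"
  using decomposition[of f] proj_eqI by metis

lemma sum_proj: "f = (\<Sum>j\<le>w. proj j f)"
proof -
  obtain gs where "\<forall>i. gs i \<in> H i" "f = (\<Sum>i\<le>w. gs i)"
    using decomposition by blast
  then show ?thesis
    using proj_eqI by simp
qed

lemma proj_H: "g \<in> H i \<Longrightarrow> proj j g = (if j = i then g else 0)"
  using vs.subspace_0[OF H_subspace] H_above_w[of i]
  by (intro proj_eqI[of "\<lambda>j. if j = i then g else 0"]) (auto simp: not_le)

lemma linear_proj: "fun_linear (proj j)"
proof (unfold Vector_Spaces.linear_iff, intro conjI allI vs.vector_space_axioms)
  fix f g :: "'z \<Rightarrow> complex" and c :: complex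
  show "proj j (f + g) = proj j f + proj j g"
    using proj_in_H vs.subspace_add[OF H_subspace] sum_proj[of f] sum_proj[of g]
    by (intro proj_eqI[of "\<lambda>i. proj i f + proj i g"]) (auto simp: sum.distrib)
  show "proj j (\<lambda>x. c * f x) = (\<lambda>x. c * proj j f x)"
    using proj_in_H vs.subspace_scale[OF H_subspace] sum_proj[of f]
    by (intro proj_eqI[of "\<lambda>i x. c * proj i f x"])
      (auto simp: fun_eq_iff sum_apply sum_distrib_left)
qed

lemma proj_V: "f \<in> V k \<Longrightarrow> k \<le> j \<Longrightarrow> proj j f = 0"
  using decomposition_V[of k f] decomposition_V[of w f] V_stable[of k] proj_eqI
  by (cases "k \<le> w") auto

lemma trace_form_proj: "h \<in> H j \<Longrightarrow> trace_form (proj j f) h = trace_form f h"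
proof -
  assume h: "h \<in> H j"
  have "trace_form f h = (\<Sum>i\<le>w. trace_form (proj i f) h)"
    by (subst sum_proj[of f]) (rule trace_form_sum_left)
  also have "\<dots> = (\<Sum>i\<le>w. if i = j then trace_form (proj j f) h else 0)"
    using H_orthogonal[OF _ proj_in_H h] by (intro sum.cong) auto
  also have "\<dots> = trace_form (proj j f) h"
    using h H_above_w[of j] by (cases "j \<le> w") auto
  finally show ?thesis ..
qed

lemma Vw_eq_sum_proj:
  assumes "f \<in> V w"
  shows "f = (\<Sum>p<w. proj p f)"
proof -
  have "f = (\<Sum>p<Suc w. proj p f)"
    using sum_proj[of f] by (simp only: lessThan_Suc_atMost)
  also have "\<dots> = (\<Sum>p<w. proj p f)"
    using proj_V[OF assms order_refl] by simp
  finally show ?thesis .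
qed

lemma Vw_subset_span_H: "V w \<subseteq> vs.span (\<Union>p<w. H p)"
proof
  fix f assume "f \<in> V w"
  then have "f = (\<Sum>p<w. proj p f)"
    by (rule Vw_eq_sum_proj)
  also have "\<dots> \<in> vs.span (\<Union>p<w. H p)"
    using proj_in_H by (intro vs.span_sum vs.span_base) auto
  finally show "f \<in> vs.span (\<Union>p<w. H p)" .
qed

lemma linear_eq_on_Vw:
  assumes "fun_linear L" "fun_linear M" "\<And>p g. p < w \<Longrightarrow> g \<in> H p \<Longrightarrow> L g = M g"
    and "f \<in> V w"
  shows "L f = M f"
proof (rule fp.linear_eq_on_span[OF assms(1,2)])
  show "f \<in> vs.span (\<Union>p<w. H p)"
    using assms(4) Vw_subset_span_H by blast
qed (use assms(3) in auto)

lemma times_H_subset: "t \<in> H 0 \<Longrightarrow> g \<in> H p \<Longrightarrow> p < w \<Longrightarrow> t * g \<in> V (Suc (Suc p))"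
  using times_Vpow[of t V1 g "Suc p"] H_0 H_subset_V by auto

lemma proj_times_above:
  assumes "t \<in> H 0" "g \<in> H p" "p < w" "Suc (Suc p) \<le> j \<or> w \<le> j"
  shows "proj j (t * g) = 0"
  using assms(4) times_H_subset[OF assms(1-3)] V_subset_Vw proj_V by blast

text \<open>Adjointness \<open>q(t g, h) = q(g, t h)\<close> turns the upper bound for \<open>t h\<close> into a
  lower one for \<open>t g\<close>.\<close>
lemma proj_times_below:
  assumes t: "t \<in> H 0" and g: "g \<in> H p" and "p < w" "Suc (Suc j) \<le> p"
  shows "proj j (t * g) = 0"
proof -
  have "trace_form (proj j (t * g)) h = 0" if h: "h \<in> H j" for h
  proof -
    have "t * h \<in> V p"
      using times_H_subset[OF t h] Vpow_mono[OF one_in_V1] assms(3,4) by fastforce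
    moreover have "g \<in> q_orth (V p)"
      using g H_subset_q_orth[of p] assms(3) by auto
    ultimately show ?thesis
      using h by (simp add: trace_form_proj trace_form_times_left q_orth_def)
  qed
  then show ?thesis
    using nondeg_onD[OF nondeg_H proj_in_H] by (simp add: q_orth_def)
qed

section \<open>The operators \<open>D\<^sup>0\<close>, \<open>D\<^sup>+\<close>, \<open>D\<^sup>-\<close>\<close>

abbreviation "D0 \<equiv> Dzero E \<alpha>"
abbreviation "Dp \<equiv> Dplus E \<alpha>"
abbreviation "Dm \<equiv> Dminus E \<alpha>"

lemma Dzero_eq: "D0 t f = (\<Sum>q<w. proj q (t * proj q f))"
  unfolding Dzero_def fmul_eq_times lambda_sum wE_def ..

lemma Dplus_eq: "Dp t f = (\<Sum>q<w - 1. proj (Suc q) (t * proj q f))"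
  unfolding Dplus_def fmul_eq_times lambda_sum wE_def ..

lemma Dminus_eq: "Dm t f = (\<Sum>q\<in>{1..<w}. proj (q - 1) (t * proj q f))"
  unfolding Dminus_def fmul_eq_times lambda_sum wE_def ..

lemma linear_proj_times_proj: "fun_linear (\<lambda>f. proj r (t * proj q f))"
  using fun_linear_compose[OF linear_proj fun_linear_compose[OF fun_linear_times linear_proj]] .

lemma linear_Dzero: "fun_linear (D0 t)"
  unfolding Dzero_eq[abs_def] by (intro fp.linear_compose_sum ballI linear_proj_times_proj)

lemma linear_Dplus: "fun_linear (Dp t)"
  unfolding Dplus_eq[abs_def] by (intro fp.linear_compose_sum ballI linear_proj_times_proj)

lemma linear_Dminus: "fun_linear (Dm t)"
  unfolding Dminus_eq[abs_def] by (intro fp.linear_compose_sum ballI linear_proj_times_proj)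

lemma proj_times_proj_H: "g \<in> H p \<Longrightarrow> proj r (t * proj q g) = (if q = p then proj r (t * g) else 0)"
  using proj_H[of g p q] fp.linear_0[OF linear_proj] by simp

lemma Dzero_H:
  assumes "g \<in> H p"
  shows "D0 t g = (if p < w then proj p (t * g) else 0)"
proof -
  have "D0 t g = (\<Sum>q<w. if q = p then proj p (t * g) else 0)"
    unfolding Dzero_eq using proj_times_proj_H[OF assms] by (intro sum.cong) auto
  then show ?thesis
    by simp
qed

lemma Dplus_H:
  assumes "g \<in> H p"
  shows "Dp t g = (if Suc p < w then proj (Suc p) (t * g) else 0)"
proof -
  have "Dp t g = (\<Sum>q<w - 1. if q = p then proj (Suc p) (t * g) else 0)"
    unfolding Dplus_eq using proj_times_proj_H[OF assms] by (intro sum.cong) auto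
  then show ?thesis
    by auto
qed

lemma Dminus_H:
  assumes "g \<in> H p"
  shows "Dm t g = (if 0 < p \<and> p < w then proj (p - 1) (t * g) else 0)"
proof -
  have "Dm t g = (\<Sum>q\<in>{1..<w}. if q = p then proj (p - 1) (t * g) else 0)"
    unfolding Dminus_eq using proj_times_proj_H[OF assms] by (intro sum.cong) auto
  then show ?thesis
    by auto
qed

lemma proj_in_Vw: "j < w \<Longrightarrow> proj j f \<in> V w"
  using proj_in_H H_subset_Vw by blast

lemma Dzero_in_Vw: "D0 t f \<in> V w"
  unfolding Dzero_eq by (intro vs.subspace_sum[OF Vpow_subspace]) (simp add: proj_in_Vw)

lemma Dplus_in_Vw: "Dp t f \<in> V w"
  unfolding Dplus_eq by (intro vs.subspace_sum[OF Vpow_subspace]) (simp add: proj_in_Vw)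

lemma Dminus_in_Vw: "Dm t f \<in> V w"
  unfolding Dminus_eq by (intro vs.subspace_sum[OF Vpow_subspace] proj_in_Vw) auto

lemma
  assumes "g \<in> H p" "p < w"
  shows Dzero_H_in_H: "D0 t g \<in> H p"
    and Dplus_H_in_H: "Suc p < w \<Longrightarrow> Dp t g \<in> H (Suc p)"
    and Dplus_H_top: "Suc p = w \<Longrightarrow> Dp t g = 0"
    and Dminus_H_in_H: "0 < p \<Longrightarrow> Dm t g \<in> H (p - 1)"
    and Dminus_H_bottom: "p = 0 \<Longrightarrow> Dm t g = 0"
  using assms proj_in_H by (simp_all add: Dzero_H Dplus_H Dminus_H)

lemma times_eq_D_sum_H:
  assumes t: "t \<in> H 0" and g: "g \<in> H p" and p: "p < w"
  shows "t * g = Dm t g + (D0 t g + Dp t g)"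
proof -
  let ?x = "\<lambda>j. proj j (t * g)"
  let ?band = "\<lambda>j. (if Suc j = p then ?x j else 0)
    + ((if j = p then ?x j else 0) + (if j = Suc p then ?x j else 0))"
  have "Dm t g + (D0 t g + Dp t g) = (\<Sum>j<w. ?band j)"
    using p by (simp add: Dminus_H[OF g] Dzero_H[OF g] Dplus_H[OF g] sum.distrib sum_if_Suc_eq)
  also have "\<dots> = (\<Sum>j<w. ?x j)"
  proof (intro sum.cong refl)
    fix j
    consider "Suc j = p" | "j = p" | "j = Suc p" | "Suc (Suc j) \<le> p" | "Suc (Suc p) \<le> j"
      by linarith
    then show "?band j = ?x j"
      by cases (simp_all add: proj_times_below[OF t g p] proj_times_above[OF t g p])
  qed
  also have "\<dots> = t * g"
    by (rule Vw_eq_sum_proj[symmetric]) (use times_H_subset[OF t g p] V_subset_Vw in blast)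
  finally show ?thesis ..
qed

lemma times_eq_D_sum:
  assumes "t \<in> H 0" "f \<in> V w"
  shows "t * f = Dm t f + (D0 t f + Dp t f)"
proof (rule linear_eq_on_Vw[OF fun_linear_times _ _ assms(2)])
  show "fun_linear (\<lambda>f. Dm t f + (D0 t f + Dp t f))"
    using fp.linear_compose_add[OF linear_Dminus
        fp.linear_compose_add[OF linear_Dzero linear_Dplus]] .
qed (rule times_eq_D_sum_H[OF assms(1)])

section \<open>Commutation relations\<close>

text \<open>Degrees are integers so that \<open>D\<^sup>\<plusminus>\<close> may shift them out of \<open>[0, w)\<close>, where
  homogeneous elements are forced to vanish.\<close>
definition homog :: "int \<Rightarrow> ('z \<Rightarrow> complex) \<Rightarrow> bool" where
  "homog k x \<longleftrightarrow> (if 0 \<le> k \<and> k < int w then x \<in> H (nat k) else x = 0)"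

lemma homog_zero: "homog k 0"
  by (simp add: homog_def vs.subspace_0[OF H_subspace])

lemma homog_add: "homog k x \<Longrightarrow> homog k y \<Longrightarrow> homog k (x + y)"
  by (auto simp: homog_def vs.subspace_add[OF H_subspace] split: if_splits)

lemma homog_diff: "homog k x \<Longrightarrow> homog k y \<Longrightarrow> homog k (x - y)"
  by (auto simp: homog_def vs.subspace_diff[OF H_subspace] split: if_splits)

lemma homog_H: "g \<in> H p \<Longrightarrow> p < w \<Longrightarrow> homog (int p) g"
  by (simp add: homog_def)

lemma proj_homog: "homog k x \<Longrightarrow> proj j x = (if int j = k then x else 0)"
  using proj_H[of x "nat k" j] fp.linear_0[OF linear_proj]
  by (auto simp: homog_def split: if_splits)

lemma homog_eq_0: "homog k x \<Longrightarrow> (\<And>j. int j = k \<Longrightarrow> proj j x = 0) \<Longrightarrow> x = 0"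
  by (metis homog_def nonneg_int_cases proj_homog)

lemma homog_Dzero: "homog k x \<Longrightarrow> homog k (D0 t x)"
  by (auto simp: homog_def Dzero_H proj_in_H fp.linear_0[OF linear_Dzero] split: if_splits)

lemma homog_Dplus:
  assumes "homog k x" "k = l - 1"
  shows "homog l (Dp t x)"
proof (cases "0 \<le> k \<and> k < int w")
  case True
  moreover have "nat l = Suc (nat k)"
    using True assms(2) by linarith
  ultimately show ?thesis
    using assms proj_in_H
    by (auto simp: homog_def Dplus_H vs.subspace_0[OF H_subspace])
next
  case False
  then show ?thesis
    using assms(1) homog_zero fp.linear_0[OF linear_Dplus] by (simp add: homog_def)
qed

lemma homog_Dminus:
  assumes "homog k x" "k = l + 1"
  shows "homog l (Dm t x)"
proof (cases "0 \<le> k \<and> k < int w")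
  case True
  moreover have "0 \<le> l \<Longrightarrow> nat k = Suc (nat l)"
    using assms(2) by linarith
  ultimately show ?thesis
    using assms proj_in_H
    by (auto simp: homog_def Dminus_H vs.subspace_0[OF H_subspace])
next
  case False
  then show ?thesis
    using assms(1) homog_zero fp.linear_0[OF linear_Dminus] by (simp add: homog_def)
qed

lemma homog_sum_eq_0:
  assumes "homog (k - 2) a" "homog (k - 1) b" "homog k c" "homog (k + 1) d" "homog (k + 2) e"
    and sum: "a + b + c + d + e = 0"
  shows "a = 0" "b = 0" "c = 0" "d = 0" "e = 0"
proof -
  have zero: "x = 0"
    if "homog l x" "\<And>j. int j = l \<Longrightarrow> proj j (a + b + c + d + e) = proj j x" for l x
    using homog_eq_0[OF that(1)] that(2) sum fp.linear_0[OF linear_proj] by metis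
  note proj_sum = fp.linear_add[OF linear_proj]
    and proj_homogs = proj_homog[OF assms(1)] proj_homog[OF assms(2)] proj_homog[OF assms(3)]
      proj_homog[OF assms(4)] proj_homog[OF assms(5)]
  show "a = 0"
    by (rule zero[OF assms(1)]) (simp add: proj_sum proj_homogs)
  show "b = 0"
    by (rule zero[OF assms(2)]) (simp add: proj_sum proj_homogs)
  show "c = 0"
    by (rule zero[OF assms(3)]) (simp add: proj_sum proj_homogs)
  show "d = 0"
    by (rule zero[OF assms(4)]) (simp add: proj_sum proj_homogs)
  show "e = 0"
    by (rule zero[OF assms(5)]) (simp add: proj_sum proj_homogs)
qed

lemma relations_H:
  assumes t: "t \<in> H 0" and t': "t' \<in> H 0" and f: "f \<in> H p" and p: "p < w"
  shows "Dp t (Dp t' f) = Dp t' (Dp t f)"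
    and "Dm t (Dm t' f) = Dm t' (Dm t f)"
    and "D0 t (Dp t' f) + Dp t (D0 t' f) = D0 t' (Dp t f) + Dp t' (D0 t f)"
    and "D0 t (Dm t' f) + Dm t (D0 t' f) = D0 t' (Dm t f) + Dm t' (D0 t f)"
    and "(D0 t (D0 t' f) - D0 t' (D0 t f))
          + ((Dp t (Dm t' f) - Dp t' (Dm t f)) + (Dm t (Dp t' f) - Dm t' (Dp t f))) = 0"
proof -
  have f_homog: "homog (int p) f"
    using f p by (rule homog_H)
  have expand: "s * (s' * f) = Dm s (Dm s' f) + (D0 s (Dm s' f) + Dp s (Dm s' f))
      + ((Dm s (D0 s' f) + (D0 s (D0 s' f) + Dp s (D0 s' f)))
      + (Dm s (Dp s' f) + (D0 s (Dp s' f) + Dp s (Dp s' f))))"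
    if "s \<in> H 0" "s' \<in> H 0" for s s'
    using times_eq_D_sum[OF that(2) H_subset_Vw[OF p, THEN subsetD, OF f]]
      times_eq_D_sum[OF that(1) Dminus_in_Vw] times_eq_D_sum[OF that(1) Dzero_in_Vw]
      times_eq_D_sum[OF that(1) Dplus_in_Vw]
    by (simp add: distrib_left)
  define a where "a = Dm t (Dm t' f) - Dm t' (Dm t f)"
  define b where "b = (D0 t (Dm t' f) + Dm t (D0 t' f)) - (D0 t' (Dm t f) + Dm t' (D0 t f))"
  define c where "c = (D0 t (D0 t' f) - D0 t' (D0 t f))
      + ((Dp t (Dm t' f) - Dp t' (Dm t f)) + (Dm t (Dp t' f) - Dm t' (Dp t f)))"
  define d where "d = (D0 t (Dp t' f) + Dp t (D0 t' f)) - (D0 t' (Dp t f) + Dp t' (D0 t f))"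
  define e where "e = Dp t (Dp t' f) - Dp t' (Dp t f)"
  have "a + b + c + d + e = t * (t' * f) - t' * (t * f)"
    unfolding expand[OF t t'] expand[OF t' t] a_def b_def c_def d_def e_def
    by (simp add: algebra_simps)
  then have sum: "a + b + c + d + e = 0"
    by (simp add: mult.left_commute)
  note homog_D = homog_diff homog_add homog_Dzero homog_Dplus homog_Dminus f_homog
  have "homog (int p - 2) a"
    unfolding a_def by (intro homog_D refl) (simp_all add: f_homog)
  moreover have "homog (int p - 1) b"
    unfolding b_def by (intro homog_D refl) (simp_all add: f_homog)
  moreover have "homog (int p) c"
    unfolding c_def by (intro homog_D refl) (simp_all add: f_homog)
  moreover have "homog (int p + 1) d"
    unfolding d_def by (intro homog_D refl) (simp_all add: f_homog)
  moreover have "homog (int p + 2) e"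
    unfolding e_def by (intro homog_D refl) (simp_all add: f_homog)
  ultimately have "a = 0" "b = 0" "c = 0" "d = 0" "e = 0"
    using homog_sum_eq_0[OF _ _ _ _ _ sum] by blast+
  then show "Dp t (Dp t' f) = Dp t' (Dp t f)"
    and "Dm t (Dm t' f) = Dm t' (Dm t f)"
    and "D0 t (Dp t' f) + Dp t (D0 t' f) = D0 t' (Dp t f) + Dp t' (D0 t f)"
    and "D0 t (Dm t' f) + Dm t (D0 t' f) = D0 t' (Dm t f) + Dm t' (D0 t f)"
    and "(D0 t (D0 t' f) - D0 t' (D0 t f))
          + ((Dp t (Dm t' f) - Dp t' (Dm t f)) + (Dm t (Dp t' f) - Dm t' (Dp t f))) = 0"
    unfolding a_def b_def c_def d_def e_def by simp_all
qed

lemma relations: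
  assumes t: "t \<in> H 0" and t': "t' \<in> H 0" and f: "f \<in> V w"
  shows "Dp t (Dp t' f) = Dp t' (Dp t f)"
    and "Dm t (Dm t' f) = Dm t' (Dm t f)"
    and "D0 t (Dp t' f) + Dp t (D0 t' f) = D0 t' (Dp t f) + Dp t' (D0 t f)"
    and "D0 t (Dm t' f) + Dm t (D0 t' f) = D0 t' (Dm t f) + Dm t' (D0 t f)"
    and "(D0 t (D0 t' f) - D0 t' (D0 t f))
          + ((Dp t (Dm t' f) - Dp t' (Dm t f)) + (Dm t (Dp t' f) - Dm t' (Dp t f))) = 0"
proof -
  note rel = relations_H[OF t t']
  show "Dp t (Dp t' f) = Dp t' (Dp t f)"
    by (rule linear_eq_on_Vw[OF fun_linear_compose[OF linear_Dplus linear_Dplus]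
          fun_linear_compose[OF linear_Dplus linear_Dplus] _ f]) (rule rel)
  show "Dm t (Dm t' f) = Dm t' (Dm t f)"
    by (rule linear_eq_on_Vw[OF fun_linear_compose[OF linear_Dminus linear_Dminus]
          fun_linear_compose[OF linear_Dminus linear_Dminus] _ f]) (rule rel)
  show "D0 t (Dp t' f) + Dp t (D0 t' f) = D0 t' (Dp t f) + Dp t' (D0 t f)"
    by (rule linear_eq_on_Vw[OF
          fp.linear_compose_add[OF fun_linear_compose[OF linear_Dzero linear_Dplus]
            fun_linear_compose[OF linear_Dplus linear_Dzero]]
          fp.linear_compose_add[OF fun_linear_compose[OF linear_Dzero linear_Dplus]
            fun_linear_compose[OF linear_Dplus linear_Dzero]] _ f]) (rule rel)
  show "D0 t (Dm t' f) + Dm t (D0 t' f) = D0 t' (Dm t f) + Dm t' (D0 t f)"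
    by (rule linear_eq_on_Vw[OF
          fp.linear_compose_add[OF fun_linear_compose[OF linear_Dzero linear_Dminus]
            fun_linear_compose[OF linear_Dminus linear_Dzero]]
          fp.linear_compose_add[OF fun_linear_compose[OF linear_Dzero linear_Dminus]
            fun_linear_compose[OF linear_Dminus linear_Dzero]] _ f]) (rule rel)
  show "(D0 t (D0 t' f) - D0 t' (D0 t f))
          + ((Dp t (Dm t' f) - Dp t' (Dm t f)) + (Dm t (Dp t' f) - Dm t' (Dp t f))) = 0"
    by (rule linear_eq_on_Vw[OF
          fp.linear_compose_add[OF
            fp.linear_compose_sub[OF fun_linear_compose[OF linear_Dzero linear_Dzero]
              fun_linear_compose[OF linear_Dzero linear_Dzero]]
            fp.linear_compose_add[OF
              fp.linear_compose_sub[OF fun_linear_compose[OF linear_Dplus linear_Dminus]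
                fun_linear_compose[OF linear_Dplus linear_Dminus]]
              fp.linear_compose_sub[OF fun_linear_compose[OF linear_Dminus linear_Dplus]
                fun_linear_compose[OF linear_Dminus linear_Dplus]]]]
          fp.linear_zero _ f]) (rule rel)
qed

end

theorem theorem0p3:
  fixes E :: "('z::finite \<Rightarrow> complex) set" and \<alpha> :: "'z \<Rightarrow> complex"
  assumes "is_subspace E"
      and "polarizing E \<alpha>"
  defines "w \<equiv> wE E \<alpha>"
      and "Vw \<equiv> VE E \<alpha> (wE E \<alpha>)"
      and "H \<equiv> Hsp E \<alpha>"
      and "D0 \<equiv> Dzero E \<alpha>" and "Dp \<equiv> Dplus E \<alpha>" and "Dm \<equiv> Dminus E \<alpha>"
  shows
    "(\<forall>t\<in>H 0. \<forall>f\<in>Vw.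
        D0 t f \<in> Vw \<and> Dp t f \<in> Vw \<and> Dm t f \<in> Vw
      \<and> fmul t f = fadd (Dm t f) (fadd (D0 t f) (Dp t f)))
   \<and> (\<forall>t\<in>H 0. \<forall>p<w. \<forall>f\<in>H p.
        D0 t f \<in> H p
      \<and> (Suc p < w \<longrightarrow> Dp t f \<in> H (Suc p)) \<and> (Suc p = w \<longrightarrow> Dp t f = (\<lambda>x. 0))
      \<and> (0 < p \<longrightarrow> Dm t f \<in> H (p - 1)) \<and> (p = 0 \<longrightarrow> Dm t f = (\<lambda>x. 0)))
   \<and> (\<forall>t\<in>H 0. \<forall>t'\<in>H 0. \<forall>f\<in>Vw.
        Dp t (Dp t' f) = Dp t' (Dp t f)
      \<and> Dm t (Dm t' f) = Dm t' (Dm t f)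
      \<and> fadd (D0 t (Dp t' f)) (Dp t (D0 t' f)) = fadd (D0 t' (Dp t f)) (Dp t' (D0 t f))
      \<and> fadd (D0 t (Dm t' f)) (Dm t (D0 t' f)) = fadd (D0 t' (Dm t f)) (Dm t' (D0 t f))
      \<and> fadd (fsub (D0 t (D0 t' f)) (D0 t' (D0 t f)))
          (fadd (fsub (Dp t (Dm t' f)) (Dp t' (Dm t f)))
                (fsub (Dm t (Dp t' f)) (Dm t' (Dp t f)))) = (\<lambda>x. 0))"
proof -
  interpret polarized E \<alpha>
    using assms(1,2) by unfold_locales
  show ?thesis
    unfolding w_def Vw_def H_def D0_def Dp_def Dm_def VE_def wE_def
      fadd_eq_plus fsub_eq_minus fmul_eq_times zero_fun_def[symmetric]
    using Dzero_in_Vw Dplus_in_Vw Dminus_in_Vw times_eq_D_sum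
      Dzero_H_in_H Dplus_H_in_H Dplus_H_top Dminus_H_in_H Dminus_H_bottom relations
    by auto
qed

end
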